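(* Let $X$ be an algebraic L-space. Then $X$ is kernel-stable (i.e., $X$ is an arithmetic L-space) if and only if $U\cap V\in{\sf ClopSUp}(X)$ for all $U,V\in{\sf ClopSUp}(X)$.
   Context: A Priestley space is a Stone space $X$ with a partial order such that clopen upsets separate points. An L-space is a Priestley space in which the downset of each clopen set is clopen and the closure of each open upset is open. ${\sf ClopUp}(X)$ is the set of clopen upsets; $\mathrm{cl}$ denotes closure. The spatial part of $X$ is $Y=\{y\in X\mid{\downarrow}y\text{ clopen}\}$. A Scott upset is a closed upset $F$ with $\min F\subseteq Y$; ${\sf ClopSUp}(X)$ is the set of clopen Scott upsets. For $U,V\in{\sf ClopUp}(X)$, $V\ll U$ means that for every open upset $W$, $U\subseteq\mathrm{cl}\,W$ implies $V\subseteq W$; $\ker U=\bigcup\{V\in{\sf ClopUp}(X)\mid V\ll U\}$; $\mathrm{core}\,U=\bigcup\{V\in{\sf ClopSUp}(X)\mid V\subseteq U\}$. $X$ is an algebraic L-space if $\mathrm{core}\,U$ is dense in $U$ for each $U\in{\sf ClopUp}(X)$; it is kernel-stable if $\ker(U\cap V)=\ker U\cap\ker V$ for all $U,V\in{\sf ClopUp}(X)$. An arithmetic L-space is a kernel-stable algebraic L-space. *)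

theory Defs
  imports "HOL-Analysis.Analysis"
begin

definition clopenin :: "'a topology \<Rightarrow> 'a set \<Rightarrow> bool" where
  "clopenin T U \<longleftrightarrow> openin T U \<and> closedin T U"

definition zero_dimensional_space :: "'a topology \<Rightarrow> bool" where
  "zero_dimensional_space T \<longleftrightarrow>
     (\<forall>U. openin T U \<longrightarrow> U = \<Union>{C. clopenin T C \<and> C \<subseteq> U})"

definition stone_space :: "'a topology \<Rightarrow> bool" where
  "stone_space T \<longleftrightarrow> compact_space T \<and> Hausdorff_space T \<and> zero_dimensional_space T"

definition poset_on :: "'a set \<Rightarrow> ('a \<Rightarrow> 'a \<Rightarrow> bool) \<Rightarrow> bool" where
  "poset_on X le \<longleftrightarrow> (\<forall>x\<in>X. le x x)
     \<and> (\<forall>x\<in>X. \<forall>y\<in>X. le x y \<and> le y x \<longrightarrow> x = y)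
     \<and> (\<forall>x\<in>X. \<forall>y\<in>X. \<forall>z\<in>X. le x y \<and> le y z \<longrightarrow> le x z)"

definition upset :: "'a topology \<Rightarrow> ('a \<Rightarrow> 'a \<Rightarrow> bool) \<Rightarrow> 'a set \<Rightarrow> bool" where
  "upset T le U \<longleftrightarrow> U \<subseteq> topspace T \<and> (\<forall>x\<in>U. \<forall>y\<in>topspace T. le x y \<longrightarrow> y \<in> U)"

definition downset_of :: "'a topology \<Rightarrow> ('a \<Rightarrow> 'a \<Rightarrow> bool) \<Rightarrow> 'a set \<Rightarrow> 'a set" where
  "downset_of T le A = {y \<in> topspace T. \<exists>x\<in>A. le y x}"

definition ClopUp :: "'a topology \<Rightarrow> ('a \<Rightarrow> 'a \<Rightarrow> bool) \<Rightarrow> 'a set set" where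
  "ClopUp T le = {U. clopenin T U \<and> upset T le U}"

definition priestley_space :: "'a topology \<Rightarrow> ('a \<Rightarrow> 'a \<Rightarrow> bool) \<Rightarrow> bool" where
  "priestley_space T le \<longleftrightarrow> stone_space T \<and> poset_on (topspace T) le
     \<and> (\<forall>x\<in>topspace T. \<forall>y\<in>topspace T. \<not> le x y \<longrightarrow>
           (\<exists>U\<in>ClopUp T le. x \<in> U \<and> y \<notin> U))"

definition L_space :: "'a topology \<Rightarrow> ('a \<Rightarrow> 'a \<Rightarrow> bool) \<Rightarrow> bool" where
  "L_space T le \<longleftrightarrow> priestley_space T le
     \<and> (\<forall>U. clopenin T U \<longrightarrow> clopenin T (downset_of T le U))
     \<and> (\<forall>U. openin T U \<and> upset T le U \<longrightarrow> openin T (T closure_of U))"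

definition spatial_part :: "'a topology \<Rightarrow> ('a \<Rightarrow> 'a \<Rightarrow> bool) \<Rightarrow> 'a set" where
  "spatial_part T le = {y \<in> topspace T. clopenin T (downset_of T le {y})}"

definition minimals :: "('a \<Rightarrow> 'a \<Rightarrow> bool) \<Rightarrow> 'a set \<Rightarrow> 'a set" where
  "minimals le F = {x \<in> F. \<forall>y\<in>F. le y x \<longrightarrow> y = x}"

definition scott_upset :: "'a topology \<Rightarrow> ('a \<Rightarrow> 'a \<Rightarrow> bool) \<Rightarrow> 'a set \<Rightarrow> bool" where
  "scott_upset T le F \<longleftrightarrow> closedin T F \<and> upset T le F \<and> minimals le F \<subseteq> spatial_part T le"

definition ClopSUp :: "'a topology \<Rightarrow> ('a \<Rightarrow> 'a \<Rightarrow> bool) \<Rightarrow> 'a set set" where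
  "ClopSUp T le = {U. clopenin T U \<and> scott_upset T le U}"

definition way_below :: "'a topology \<Rightarrow> ('a \<Rightarrow> 'a \<Rightarrow> bool) \<Rightarrow> 'a set \<Rightarrow> 'a set \<Rightarrow> bool" where
  "way_below T le V U \<longleftrightarrow> V \<in> ClopUp T le \<and> U \<in> ClopUp T le \<and>
     (\<forall>W. openin T W \<and> upset T le W \<and> U \<subseteq> T closure_of W \<longrightarrow> V \<subseteq> W)"

definition ker :: "'a topology \<Rightarrow> ('a \<Rightarrow> 'a \<Rightarrow> bool) \<Rightarrow> 'a set \<Rightarrow> 'a set" where
  "ker T le U = \<Union>{V \<in> ClopUp T le. way_below T le V U}"

definition core :: "'a topology \<Rightarrow> ('a \<Rightarrow> 'a \<Rightarrow> bool) \<Rightarrow> 'a set \<Rightarrow> 'a set" where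
  "core T le U = \<Union>{V \<in> ClopSUp T le. V \<subseteq> U}"

definition algebraic_L_space :: "'a topology \<Rightarrow> ('a \<Rightarrow> 'a \<Rightarrow> bool) \<Rightarrow> bool" where
  "algebraic_L_space T le \<longleftrightarrow> L_space T le
     \<and> (\<forall>U\<in>ClopUp T le. U \<subseteq> T closure_of (core T le U))"

definition kernel_stable :: "'a topology \<Rightarrow> ('a \<Rightarrow> 'a \<Rightarrow> bool) \<Rightarrow> bool" where
  "kernel_stable T le \<longleftrightarrow>
     (\<forall>U\<in>ClopUp T le. \<forall>V\<in>ClopUp T le. ker T le (U \<inter> V) = ker T le U \<inter> ker T le V)"

definition arithmetic_L_space :: "'a topology \<Rightarrow> ('a \<Rightarrow> 'a \<Rightarrow> bool) \<Rightarrow> bool" where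
  "arithmetic_L_space T le \<longleftrightarrow> algebraic_L_space T le \<and> kernel_stable T le"

end

theory Submission
  imports Defs
begin

text \<open>In an algebraic L-space the kernel of a clopen upset U coincides with its core. Every clopen
  Scott upset K is way below itself: its minimal points (which exist by Zorn's lemma and
  compactness) are spatial, so any open upset whose closure contains K already contains K.
  Conversely, core U is an open upset whose closure contains U, so whatever is way below U lies
  in core U. Since U is a Scott upset exactly when
  core U = U, kernel-stability says that core commutes with binary intersections, which holds
  precisely when clopen Scott upsets are closed under intersection.\<close>

lemma compact_space_Inter_chain_nonempty:
  assumes "compact_space X" and closed: "\<And>C. C \<in> \<C> \<Longrightarrow> closedin X C"
    and nonempty: "\<And>C. C \<in> \<C> \<Longrightarrow> C \<noteq> {}" and chain: "chain\<^sub>\<subseteq> \<C>"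
  shows "\<Inter>\<C> \<noteq> {}"
proof -
  have finite_Inter: "\<Inter>\<F> \<noteq> {}" if "finite \<F>" "\<F> \<subseteq> \<C>" for \<F>
  proof (cases "\<F> = {}")
    case False
    have "subset.chain \<C> \<F>"
      using chain that(2) unfolding chain_subset_def subset_chain_def by blast
    then have "\<Inter>\<F> \<in> \<F>"
      using Inter_in_chain that(1) False by blast
    then show ?thesis using nonempty that(2) by blast
  qed simp
  show ?thesis
  proof (rule assms(1)[unfolded compact_space_fip, THEN spec[of _ \<C>], THEN mp])
    show "Ball \<C> (closedin X) \<and> (\<forall>\<F>. finite \<F> \<and> \<F> \<subseteq> \<C> \<longrightarrow> \<Inter>\<F> \<noteq> {})"
      using closed finite_Inter by blast
  qed
qed

lemma closedin_downset_of_singleton: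
  assumes P: "priestley_space T le" and a: "a \<in> topspace T"
  shows "closedin T (downset_of T le {a})"
proof -
  have "\<exists>U. openin T U \<and> y \<in> U \<and> U \<subseteq> topspace T - downset_of T le {a}"
    if y: "y \<in> topspace T" "y \<notin> downset_of T le {a}" for y
  proof -
    have "\<not> le y a" using y by (simp add: downset_of_def)
    with P y(1) a obtain U where U: "U \<in> ClopUp T le" "y \<in> U" "a \<notin> U"
      unfolding priestley_space_def by blast
    then have "openin T U" "upset T le U" by (simp_all add: ClopUp_def clopenin_def)
    then have "U \<subseteq> topspace T - downset_of T le {a}"
      using U(3) a unfolding upset_def downset_of_def by blast
    with \<open>openin T U\<close> U(2) show ?thesis by blast
  qed
  then have "openin T (topspace T - downset_of T le {a})"
    by (subst openin_subopen) blast
  then show ?thesis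
    by (simp add: closedin_def downset_of_def)
qed

lemma exists_minimal_below:
  assumes "compact_space T" and po: "poset_on (topspace T) le"
    and down_closed: "\<And>a. a \<in> topspace T \<Longrightarrow> closedin T (downset_of T le {a})"
    and K: "closedin T K" and x: "x \<in> K"
  shows "\<exists>m\<in>minimals le K. le m x"
proof -
  define A where "A = {y \<in> K. le y x}"
  have KT: "K \<subseteq> topspace T" using K closedin_subset by blast
  let ?X = "topspace T"
  have refl: "\<And>a. a \<in> ?X \<Longrightarrow> le a a"
    and antisym: "\<And>a b. a \<in> ?X \<Longrightarrow> b \<in> ?X \<Longrightarrow> le a b \<Longrightarrow> le b a \<Longrightarrow> a = b"
    and trans: "\<And>a b c. a \<in> ?X \<Longrightarrow> b \<in> ?X \<Longrightarrow> c \<in> ?X \<Longrightarrow> le a b \<Longrightarrow> le b c \<Longrightarrow> le a c"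
    using po unfolding poset_on_def by blast+
  have AX: "A \<subseteq> ?X" using KT by (auto simp: A_def)
  have "partial_order_on A (relation_of (\<lambda>a b. le b a) A)"
  proof (rule partial_order_on_relation_ofI)
    show "le a a" if "a \<in> A" for a using that AX refl by blast
    show "le c a" if "a \<in> A" "b \<in> A" "c \<in> A" "le b a" "le c b" for a b c
      using that AX trans by blast
    show "a = b" if "a \<in> A" "b \<in> A" "le b a" "le a b" for a b
      using that AX antisym by blast
  qed
  then obtain m where m: "m \<in> A" and m_min: "\<And>a. a \<in> A \<Longrightarrow> le a m \<Longrightarrow> a = m"
  proof (rule predicate_Zorn[THEN bexE])
    fix C assume C: "C \<in> Chains (relation_of (\<lambda>a b. le b a) A)"
    have CA: "C \<subseteq> A" using Chains_relation_of[OF C] .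
    have comparable: "le c d \<or> le d c" if "c \<in> C" "d \<in> C" for c d
      using C that unfolding Chains_def relation_of_def by blast
    show "\<exists>u\<in>A. \<forall>c\<in>C. le u c"
    proof (cases "C = {}")
      case True
      then show ?thesis using refl x KT by (auto simp: A_def)
    next
      case False
      define \<C> where "\<C> = (\<lambda>c. K \<inter> downset_of T le {c}) ` C"
      have down_mono: "downset_of T le {c} \<subseteq> downset_of T le {d}"
        if "c \<in> ?X" "d \<in> ?X" "le c d" for c d
        using that trans unfolding downset_of_def by blast
      have "chain\<^sub>\<subseteq> \<C>"
        unfolding chain_subset_def
      proof (intro ballI)
        fix D E assume "D \<in> \<C>" "E \<in> \<C>"
        then obtain c d where "c \<in> C" "d \<in> C" "D = K \<inter> downset_of T le {c}"
          "E = K \<inter> downset_of T le {d}" by (auto simp: \<C>_def)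
        with comparable[of c d] down_mono[of c d] down_mono[of d c] CA AX
        show "D \<subseteq> E \<or> E \<subseteq> D" by blast
      qed
      moreover have "closedin T D" "D \<noteq> {}" if "D \<in> \<C>" for D
        using that CA AX K refl down_closed unfolding \<C>_def A_def downset_of_def
        by (fastforce intro!: closedin_Int)+
      ultimately have "\<Inter>\<C> \<noteq> {}"
        using compact_space_Inter_chain_nonempty[OF assms(1)] by blast
      then obtain u where u: "u \<in> K" "\<And>c. c \<in> C \<Longrightarrow> le u c"
        using False unfolding \<C>_def downset_of_def by blast
      obtain c where "c \<in> C" using False by blast
      then have "c \<in> K" "le c x" using CA by (auto simp: A_def)
      then have "le u x" using u \<open>c \<in> C\<close> KT x trans[of u c x] by blast
      then show ?thesis using u by (auto simp: A_def)
    qed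
  qed auto
  have "m \<in> minimals le K"
    unfolding minimals_def
  proof (intro CollectI conjI ballI impI)
    show "m \<in> K" using m by (simp add: A_def)
    fix y assume y: "y \<in> K" "le y m"
    with m KT x have "le y x" using trans[of y m x] by (auto simp: A_def)
    with y m_min show "y = m" by (simp add: A_def)
  qed
  then show ?thesis using m by (auto simp: A_def)
qed

lemma priestley_exists_minimal_below:
  assumes P: "priestley_space T le" and "closedin T K" and "x \<in> K"
  shows "\<exists>m\<in>minimals le K. le m x"
proof (rule exists_minimal_below)
  show "compact_space T" "poset_on (topspace T) le"
    using P by (simp_all add: priestley_space_def stone_space_def)
  show "\<And>a. a \<in> topspace T \<Longrightarrow> closedin T (downset_of T le {a})"
    using P by (rule closedin_downset_of_singleton)
qed (use assms in auto)

lemma ClopSUp_subset_ClopUp: "ClopSUp T le \<subseteq> ClopUp T le"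
  unfolding ClopSUp_def ClopUp_def scott_upset_def by blast

lemma ClopUp_Int: "U \<in> ClopUp T le \<Longrightarrow> V \<in> ClopUp T le \<Longrightarrow> U \<inter> V \<in> ClopUp T le"
  unfolding ClopUp_def clopenin_def upset_def by auto

lemma way_belowD:
  assumes "way_below T le V U" and "openin T W" "upset T le W" "U \<subseteq> T closure_of W"
  shows "V \<subseteq> W"
  using assms unfolding way_below_def by blast

lemma way_below_mono:
  assumes "way_below T le V U" and "U \<subseteq> U'" and "U' \<in> ClopUp T le"
  shows "way_below T le V U'"
  using assms unfolding way_below_def by blast

text \<open>An open upset W with K \<subseteq> cl W meets the open set \<down>m at every minimal point m of K
  (m is spatial), so W contains m and hence everything above it.\<close>
lemma ClopSUp_way_below_self:
  assumes P: "priestley_space T le" and K: "K \<in> ClopSUp T le"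
  shows "way_below T le K K"
proof -
  have "K \<subseteq> W" if W: "openin T W" "upset T le W" "K \<subseteq> T closure_of W" for W
  proof
    fix x assume "x \<in> K"
    then obtain m where m: "m \<in> minimals le K" "le m x"
      using K priestley_exists_minimal_below[OF P] unfolding ClopSUp_def scott_upset_def by blast
    then have "m \<in> K" "m \<in> spatial_part T le"
      using K unfolding minimals_def ClopSUp_def scott_upset_def by auto
    then have open_down: "openin T (downset_of T le {m})" and mT: "m \<in> topspace T"
      unfolding spatial_part_def clopenin_def by auto
    have "m \<in> downset_of T le {m}"
      using P mT unfolding priestley_space_def poset_on_def downset_of_def by auto
    moreover have "m \<in> T closure_of W" using \<open>m \<in> K\<close> W(3) by blast
    ultimately have "\<exists>w\<in>W. w \<in> downset_of T le {m}"
      using open_down unfolding in_closure_of by blast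
    then obtain w where "w \<in> W" "le w m" unfolding downset_of_def by blast
    then have "m \<in> W" using W(2) mT unfolding upset_def by blast
    moreover have "x \<in> topspace T"
      using \<open>x \<in> K\<close> K unfolding ClopSUp_def scott_upset_def upset_def by blast
    ultimately show "x \<in> W" using W(2) m(2) unfolding upset_def by blast
  qed
  moreover have "K \<in> ClopUp T le" using K ClopSUp_subset_ClopUp by blast
  ultimately show ?thesis unfolding way_below_def by blast
qed

lemma core_subset_ker:
  assumes P: "priestley_space T le" and U: "U \<in> ClopUp T le"
  shows "core T le U \<subseteq> ker T le U"
proof
  fix x assume "x \<in> core T le U"
  then obtain K where K: "K \<in> ClopSUp T le" "K \<subseteq> U" "x \<in> K" unfolding core_def by blast
  have "way_below T le K U"
    using way_below_mono[OF ClopSUp_way_below_self[OF P K(1)] K(2) U] .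
  moreover have "K \<in> ClopUp T le" using K(1) ClopSUp_subset_ClopUp by blast
  ultimately show "x \<in> ker T le U" using K(3) unfolding ker_def by blast
qed

lemma open_upset_core: "openin T (core T le U)" "upset T le (core T le U)"
  unfolding core_def ClopSUp_def clopenin_def scott_upset_def upset_def
  by (auto intro: openin_Union)

lemma ker_subset_core:
  assumes "U \<subseteq> T closure_of (core T le U)"
  shows "ker T le U \<subseteq> core T le U"
proof
  fix x assume "x \<in> ker T le U"
  then obtain V where V: "way_below T le V U" "x \<in> V" unfolding ker_def by blast
  have "V \<subseteq> core T le U" using way_belowD[OF V(1) open_upset_core assms] .
  with V(2) show "x \<in> core T le U" by blast
qed

lemma ker_eq_core:
  assumes A: "algebraic_L_space T le" and U: "U \<in> ClopUp T le"
  shows "ker T le U = core T le U"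
proof -
  have P: "priestley_space T le"
    using A unfolding algebraic_L_space_def L_space_def by blast
  have dense: "U \<subseteq> T closure_of (core T le U)"
    using A U unfolding algebraic_L_space_def by blast
  show ?thesis
    using ker_subset_core[OF dense] core_subset_ker[OF P U] by (rule subset_antisym)
qed

lemma ClopSUp_iff_core_eq:
  assumes "U \<in> ClopUp T le"
  shows "U \<in> ClopSUp T le \<longleftrightarrow> core T le U = U"
proof
  assume "U \<in> ClopSUp T le"
  then show "core T le U = U" unfolding core_def by blast
next
  assume core_eq: "core T le U = U"
  have "minimals le U \<subseteq> spatial_part T le"
  proof
    fix x assume x: "x \<in> minimals le U"
    then obtain K where K: "K \<in> ClopSUp T le" "K \<subseteq> U" "x \<in> K"
      using core_eq unfolding minimals_def core_def by blast
    then have "x \<in> minimals le K" using x unfolding minimals_def by blast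
    then show "x \<in> spatial_part T le" using K(1) unfolding ClopSUp_def scott_upset_def by blast
  qed
  with assms show "U \<in> ClopSUp T le"
    by (simp add: ClopUp_def ClopSUp_def scott_upset_def clopenin_def)
qed

lemma core_Int:
  assumes "\<forall>K\<in>ClopSUp T le. \<forall>L\<in>ClopSUp T le. K \<inter> L \<in> ClopSUp T le"
  shows "core T le (U \<inter> V) = core T le U \<inter> core T le V"
proof
  show "core T le (U \<inter> V) \<subseteq> core T le U \<inter> core T le V" unfolding core_def by blast
  show "core T le U \<inter> core T le V \<subseteq> core T le (U \<inter> V)"
  proof
    fix x assume "x \<in> core T le U \<inter> core T le V"
    then obtain K L where "K \<in> ClopSUp T le" "K \<subseteq> U" "x \<in> K" "L \<in> ClopSUp T le" "L \<subseteq> V" "x \<in> L"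
      unfolding core_def by blast
    with assms show "x \<in> core T le (U \<inter> V)" unfolding core_def
      by (intro UnionI[of "K \<inter> L"]) auto
  qed
qed

theorem lemma5p2:
  fixes T :: "'a topology" and le :: "'a \<Rightarrow> 'a \<Rightarrow> bool"
  assumes "algebraic_L_space T le"
  shows "kernel_stable T le \<longleftrightarrow>
           (\<forall>U\<in>ClopSUp T le. \<forall>V\<in>ClopSUp T le. U \<inter> V \<in> ClopSUp T le)"
proof
  assume stable: "kernel_stable T le"
  show "\<forall>U\<in>ClopSUp T le. \<forall>V\<in>ClopSUp T le. U \<inter> V \<in> ClopSUp T le"
  proof (intro ballI)
    fix U V assume U: "U \<in> ClopSUp T le" and V: "V \<in> ClopSUp T le"
    then have U': "U \<in> ClopUp T le" and V': "V \<in> ClopUp T le" and UV: "U \<inter> V \<in> ClopUp T le"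
      using ClopSUp_subset_ClopUp ClopUp_Int by blast+
    have "core T le (U \<inter> V) = ker T le (U \<inter> V)" using ker_eq_core[OF assms UV] ..
    also have "\<dots> = ker T le U \<inter> ker T le V" using stable U' V' unfolding kernel_stable_def by blast
    also have "\<dots> = core T le U \<inter> core T le V" using ker_eq_core[OF assms] U' V' by simp
    also have "\<dots> = U \<inter> V" using U V ClopSUp_iff_core_eq[OF U'] ClopSUp_iff_core_eq[OF V'] by simp
    finally show "U \<inter> V \<in> ClopSUp T le" using ClopSUp_iff_core_eq[OF UV] by blast
  qed
next
  assume closed_Int: "\<forall>U\<in>ClopSUp T le. \<forall>V\<in>ClopSUp T le. U \<inter> V \<in> ClopSUp T le"
  show "kernel_stable T le"
    unfolding kernel_stable_def
  proof (intro ballI)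
    fix U V assume U: "U \<in> ClopUp T le" and V: "V \<in> ClopUp T le"
    have "ker T le (U \<inter> V) = core T le (U \<inter> V)"
      using ker_eq_core[OF assms ClopUp_Int[OF U V]] .
    also have "\<dots> = core T le U \<inter> core T le V" by (rule core_Int[OF closed_Int])
    also have "\<dots> = ker T le U \<inter> ker T le V"
      using ker_eq_core[OF assms U] ker_eq_core[OF assms V] by simp
    finally show "ker T le (U \<inter> V) = ker T le U \<inter> ker T le V" .
  qed
qed

end
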